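(* Let $d\ge3$ and $\overrightarrow{w}\in(0,\infty)^d$. Suppose there is a partition of $\{1,\dots,d\}$ into pairwise disjoint nonempty sets $A,B,C$ such that, with $a=\sum_{i\in A}w_i$, $b=\sum_{i\in B}w_i$, $c=\sum_{i\in C}w_i$, one has $a+b+c\ge 2\max\{a,b,c\}$. Then there exists a random vector $\overrightarrow{U}=(U_1,\dots,U_d)$ with each $U_i$ uniform on $[0,1]$ such that $\sum_{i=1}^d w_iU_i=\frac12\sum_{i=1}^dw_i$ almost surely. *)

theory Defs
  imports "HOL-Probability.Probability"
begin

end

theory Submission
  imports Defs
begin

text \<open>
  All coordinates are functions of a single uniform variable \<open>T\<close> on the circle \<open>[0,1)\<close>.
  The triangle excesses \<open>p = b + c - a\<close>, \<open>q = a - b + c\<close>, \<open>r = a + b - c\<close> are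
  nonnegative, and with \<open>D = pq + qr + rp\<close> the points \<open>0 \<le> t\<^sub>1 \<le> t\<^sub>2\<close> cut the circle into
  arcs of lengths \<open>pr/D\<close>, \<open>pq/D\<close>, \<open>qr/D\<close>. The coordinates in \<open>B\<close>, \<open>C\<close>, \<open>A\<close> are tent
  functions of \<open>T\<close> rising from 0 to 1 over the first, second, third arc respectively and
  falling back over the rest of the circle; a tent function of a uniform variable is again
  uniform. On every arc the slopes of the three tents, weighted by \<open>a\<close>, \<open>b\<close>, \<open>c\<close>, cancel,
  so the weighted sum is constant, equal to \<open>(a + b + c)/2\<close>.
\<close>

abbreviation unit_uniform :: "real measure" where
  "unit_uniform \<equiv> uniform_measure lborel {0..1}"

lemma prob_space_unit_uniform: "prob_space unit_uniform"
  by (rule prob_space_uniform_measure) auto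

lemma measure_unit_uniform_sublevel:
  fixes f :: "real \<Rightarrow> real"
  assumes "f \<in> borel_measurable borel"
  shows "measure unit_uniform (f -` {..x}) = measure lborel {T\<in>{0..1}. f T \<le> x}"
proof -
  have "f -` {..x} \<in> sets lborel" using measurable_sets[OF assms atMost_borel] by simp
  then show ?thesis by (simp add: Int_def conj_commute)
qed

lemma distr_unit_uniform_eqI:
  fixes f :: "real \<Rightarrow> real"
  assumes f: "f \<in> borel_measurable borel"
    and range: "\<And>T. T \<in> {0..1} \<Longrightarrow> f T \<in> {0..1}"
    and cdf: "\<And>x. 0 \<le> x \<Longrightarrow> x < 1 \<Longrightarrow> measure lborel {T\<in>{0..1}. f T \<le> x} = x"
  shows "distr unit_uniform lborel f = unit_uniform"
proof (rule cdf_unique)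
  interpret prob_space unit_uniform by (rule prob_space_unit_uniform)
  have f': "f \<in> measurable unit_uniform lborel" using f by simp
  show "real_distribution (distr unit_uniform lborel f)"
    using prob_space_distr[OF f'] by (simp add: real_distribution_def real_distribution_axioms_def)
  show "real_distribution unit_uniform"
    by (simp add: real_distribution_def real_distribution_axioms_def prob_space_axioms)
  show "cdf (distr unit_uniform lborel f) = cdf unit_uniform"
  proof
    fix x
    have "cdf (distr unit_uniform lborel f) x = measure lborel {T\<in>{0..1}. f T \<le> x}"
      unfolding cdf_def using f by (simp add: measure_distr measure_unit_uniform_sublevel)
    also have "\<dots> = measure lborel {T\<in>{0..1}. T \<le> x}"
    proof -
      consider "x < 0" | "1 \<le> x" | "0 \<le> x" "x < 1" by linarith
      then show ?thesis
      proof cases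
        case 1
        then have "{T\<in>{0..1}. f T \<le> x} = {}" "{T\<in>{0..1::real}. T \<le> x} = {}"
          using range by force+
        then show ?thesis by (simp only:)
      next
        case 2
        then have "{T\<in>{0..1}. f T \<le> x} = {0..1}" "{T\<in>{0..1::real}. T \<le> x} = {0..1}"
          using range by force+
        then show ?thesis by (simp only:)
      next
        case 3
        then have "{T\<in>{0..1::real}. T \<le> x} = {0..x}" by auto
        then show ?thesis using 3 cdf by simp
      qed
    qed
    also have "\<dots> = cdf unit_uniform x"
      unfolding cdf_def using measure_unit_uniform_sublevel[of "\<lambda>T. T"] by simp
    finally show "cdf (distr unit_uniform lborel f) x = cdf unit_uniform x" .
  qed
qed

lemma measure_Icc_Un_Icc:
  fixes l1 u1 l2 u2 :: real
  assumes "l1 \<le> u1" "u1 < l2" "l2 \<le> u2"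
  shows "measure lborel ({l1..u1} \<union> {l2..u2}) = (u1 - l1) + (u2 - l2)"
  using assms by (subst measure_Union) auto

definition tent :: "real \<Rightarrow> real \<Rightarrow> real" where
  "tent u T = (if T \<le> u then T / u else (1 - T) / (1 - u))"

definition circle_shift :: "real \<Rightarrow> real \<Rightarrow> real" where
  "circle_shift v T = (if T < v then T + 1 - v else T - v)"

definition circular_tent :: "real \<Rightarrow> real \<Rightarrow> real \<Rightarrow> real" where
  "circular_tent v u T = tent u (circle_shift v T)"

lemma tent_measurable [measurable]: "tent u \<in> borel_measurable borel"
  unfolding tent_def by measurable

lemma circle_shift_measurable [measurable]: "circle_shift v \<in> borel_measurable borel"
  unfolding circle_shift_def by measurable

lemma circular_tent_measurable [measurable]: "circular_tent v u \<in> borel_measurable borel"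
  unfolding circular_tent_def by measurable

lemma tent_sublevel:
  assumes "0 \<le> u" "u < 1" "0 \<le> x" "x < 1"
  shows "{T\<in>{0..1}. tent u T \<le> x} = {0..u*x} \<union> {1-(1-u)*x..1}"
proof -
  have "0 < (1-u)*(1-x)" using assms by simp
  then have ux: "u*x \<le> u" "u < 1-(1-u)*x" using assms by (auto simp: mult_left_le algebra_simps)
  show ?thesis
  proof (intro set_eqI iffI)
    fix T assume "T \<in> {T\<in>{0..1}. tent u T \<le> x}"
    then show "T \<in> {0..u*x} \<union> {1-(1-u)*x..1}"
      using assms by (cases "T \<le> u") (auto simp: tent_def divide_le_eq mult.commute split: if_splits)
  next
    fix T assume "T \<in> {0..u*x} \<union> {1-(1-u)*x..1}"
    then show "T \<in> {T\<in>{0..1}. tent u T \<le> x}"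
      using assms ux by (cases "T \<le> u") (auto simp: tent_def divide_le_eq mult.commute)
  qed
qed

lemma distr_tent:
  assumes "0 \<le> u" "u \<le> 1"
  shows "distr unit_uniform lborel (tent u) = unit_uniform"
proof (rule distr_unit_uniform_eqI)
  show "tent u \<in> borel_measurable borel" by measurable
  show "tent u T \<in> {0..1}" if "T \<in> {0..1}" for T
    using that assms by (auto simp: tent_def divide_le_eq_1)
  fix x :: real assume x: "0 \<le> x" "x < 1"
  show "measure lborel {T\<in>{0..1}. tent u T \<le> x} = x"
  proof (cases "u = 1")
    case True
    then have "{T\<in>{0..1}. tent u T \<le> x} = {0..x}" using x by (auto simp: tent_def)
    then show ?thesis using x by simp
  next
    case False
    have "0 < (1-u)*(1-x)" using assms x False by simp
    then have "0 \<le> u*x" "u*x < 1-(1-u)*x" using assms x by (auto simp: algebra_simps)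
    then have "measure lborel ({0..u*x} \<union> {1-(1-u)*x..1}) = x"
      using assms x by (subst measure_Icc_Un_Icc) (auto simp: algebra_simps mult_left_le_one_le)
    then show ?thesis using assms x False by (simp only: tent_sublevel)
  qed
qed

lemma distr_circle_shift:
  assumes "0 \<le> v" "v \<le> 1"
  shows "distr unit_uniform lborel (circle_shift v) = unit_uniform"
proof (rule distr_unit_uniform_eqI)
  show "circle_shift v \<in> borel_measurable borel" by measurable
  show "circle_shift v T \<in> {0..1}" if "T \<in> {0..1}" for T
    using that assms by (auto simp: circle_shift_def)
  fix x :: real assume x: "0 \<le> x" "x < 1"
  show "measure lborel {T\<in>{0..1}. circle_shift v T \<le> x} = x"
  proof (cases "x + v < 1")
    case True
    then have "{T\<in>{0..1}. circle_shift v T \<le> x} = {v..x+v}"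
      using assms x by (auto simp: circle_shift_def)
    then show ?thesis using x by simp
  next
    case False
    then have "{T\<in>{0..1}. circle_shift v T \<le> x} = {0..x+v-1} \<union> {v..1}"
      using assms x by (auto simp: circle_shift_def)
    moreover have "measure lborel ({0..x+v-1} \<union> {v..1}) = x"
      using assms x False by (subst measure_Icc_Un_Icc) auto
    ultimately show ?thesis by (simp only:)
  qed
qed

lemma distr_circular_tent:
  assumes "0 \<le> v" "v \<le> 1" "0 \<le> u" "u \<le> 1"
  shows "distr unit_uniform lborel (circular_tent v u) = unit_uniform"
proof -
  have "distr unit_uniform lborel (circular_tent v u)
      = distr (distr unit_uniform lborel (circle_shift v)) lborel (tent u)"
    unfolding circular_tent_def[abs_def] by (subst distr_distr) (auto simp: comp_def)
  also have "\<dots> = unit_uniform" using assms by (simp add: distr_circle_shift distr_tent)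
  finally show ?thesis .
qed

lemma unit_uniform_coupling:
  fixes f :: "'i \<Rightarrow> real \<Rightarrow> real"
  assumes f: "\<And>i. i \<in> I \<Longrightarrow> f i \<in> measurable unit_uniform lborel"
    and marginals: "\<And>i. i \<in> I \<Longrightarrow> distr unit_uniform lborel (f i) = unit_uniform"
    and P: "Measurable.pred (PiM I (\<lambda>_. lborel)) P"
    and AE_P: "AE T in unit_uniform. P (\<lambda>i\<in>I. f i T)"
  shows "\<exists>M. prob_space M \<and> sets M = sets (PiM I (\<lambda>_. lborel)) \<and>
    (\<forall>i\<in>I. distr M lborel (\<lambda>x. x i) = unit_uniform) \<and> (AE x in M. P x)"
proof (intro exI conjI ballI)
  let ?F = "\<lambda>T. \<lambda>i\<in>I. f i T"
  let ?M = "distr unit_uniform (PiM I (\<lambda>_. lborel)) ?F"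
  have F: "?F \<in> measurable unit_uniform (PiM I (\<lambda>_. lborel))"
    using f by (rule measurable_restrict)
  show "prob_space ?M"
    using F by (intro prob_space.prob_space_distr prob_space_unit_uniform)
  show "sets ?M = sets (PiM I (\<lambda>_. lborel))" by simp
  show "distr ?M lborel (\<lambda>x. x i) = unit_uniform" if "i \<in> I" for i
    using that F marginals by (subst distr_distr) (auto simp: comp_def)
  show "AE x in ?M. P x"
    using F P AE_P by (subst AE_distr_iff) auto
qed

lemma divide_mult_divide_cancel_right:
  fixes x y D :: real
  assumes "x \<noteq> 0" "y \<noteq> 0"
  shows "y / (x*y / D) = D / x"
  using assms by (cases "D = 0") (simp_all add: field_simps)

lemma add_divide_mult_divide:
  fixes x y D :: real
  assumes "x \<noteq> 0" "y \<noteq> 0"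
  shows "(x + y) / (x*y / D) = D/x + D/y"
  using assms by (cases "D = 0") (simp_all add: field_simps)

locale three_tents =
  fixes p q r :: real
  assumes nonneg: "0 \<le> p" "0 \<le> q" "0 \<le> r"
    and pair_pos: "0 < p + q" "0 < q + r" "0 < r + p"
begin

definition D where "D = p*q + q*r + r*p"
definition t1 where "t1 = p*r / D"
definition t2 where "t2 = p*(q + r) / D"

lemma D_pos: "0 < D"
proof -
  consider "0 < p" "0 < q" | "0 < q" "0 < r" | "0 < r" "0 < p"
    using nonneg pair_pos by linarith
  then show ?thesis
    unfolding D_def using nonneg by cases (auto simp: add_pos_nonneg add_nonneg_pos)
qed

lemma arc_lengths:
  "t2 - t1 = p*q / D" "1 - t2 = q*r / D" "1 - t1 = q*(p + r) / D" "1 + t1 - t2 = r*(p + q) / D"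
proof -
  have "1 - t2 = (D - p*(q + r)) / D" "1 - t1 = (D - p*r) / D" "1 + t1 - t2 = (D - p*q) / D"
    using D_pos unfolding t1_def t2_def by (simp_all add: field_simps)
  moreover have "D - p*(q + r) = q*r" "D - p*r = q*(p + r)" "D - p*q = r*(p + q)"
    unfolding D_def by (simp_all add: algebra_simps)
  ultimately show "1 - t2 = q*r / D" "1 - t1 = q*(p + r) / D" "1 + t1 - t2 = r*(p + q) / D"
    by simp_all
  show "t2 - t1 = p*q / D"
    unfolding t1_def t2_def by (simp add: diff_divide_distrib[symmetric] algebra_simps)
qed

lemma t1_t2_bounds: "0 \<le> t1" "t1 \<le> t2" "t2 \<le> 1"
proof -
  have "0 \<le> t2 - t1" "0 \<le> 1 - t2" unfolding arc_lengths using D_pos nonneg by simp_all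
  then show "t1 \<le> t2" "t2 \<le> 1" by simp_all
  show "0 \<le> t1" unfolding t1_def using D_pos nonneg by simp
qed

definition X where "X = circular_tent t2 (1 - t2)"
definition Y where "Y = circular_tent 0 t1"
definition Z where "Z = circular_tent t1 (t2 - t1)"

lemma distr_XYZ:
  "distr unit_uniform lborel X = unit_uniform"
  "distr unit_uniform lborel Y = unit_uniform"
  "distr unit_uniform lborel Z = unit_uniform"
  unfolding X_def Y_def Z_def using t1_t2_bounds by (simp_all add: distr_circular_tent)

lemma weighted_sum_XYZ:
  assumes T: "0 < T" "T < 1" "T \<noteq> t1" "T \<noteq> t2"
  shows "(q + r) * X T + (p + r) * Y T + (p + q) * Z T = p + q + r"
proof -
  note D = D_pos and t = t1_t2_bounds
  consider "T < t1" | "t1 < T" "T < t2" | "t2 < T"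
    using T by linarith
  then show ?thesis
  proof cases
    case 1
    then have "0 < p*r / D" using T unfolding t1_def by simp
    then have pr: "0 < p" "0 < r" using nonneg D by (auto simp: zero_less_divide_iff zero_less_mult_iff)
    have slopes: "(q + r) / t2 = D/p" "(p + r) / t1 = D/p + D/r" "(p + q) / (1 + t1 - t2) = D/r"
        "t1 * (D/r) = p"
      using D pr pair_pos unfolding arc_lengths unfolding t1_def t2_def
      by (simp_all add: divide_mult_divide_cancel_right add_divide_mult_divide del: divide_divide_eq_right)
    have on_arc: "X T = 1 - T / t2" "Y T = T / t1" "Z T = (t1 - T) / (1 + t1 - t2)"
      using 1 T t unfolding X_def Y_def Z_def circular_tent_def tent_def circle_shift_def
      by (auto simp: field_simps)
    have "(q + r) * X T + (p + r) * Y T + (p + q) * Z T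
        = (q + r) - T * ((q + r) / t2) + T * ((p + r) / t1) + (t1 - T) * ((p + q) / (1 + t1 - t2))"
      unfolding on_arc by (simp add: algebra_simps)
    also have "\<dots> = p + q + r" unfolding slopes(1-3) using slopes(4)
      by (simp only: ring_distribs mult_1_left; linarith)
    finally show ?thesis .
  next
    case 2
    then have "0 < p*q / D" unfolding arc_lengths(1)[symmetric] by simp
    then have pq: "0 < p" "0 < q" using nonneg D by (auto simp: zero_less_divide_iff zero_less_mult_iff)
    have slopes: "(q + r) / t2 = D/p" "(p + r) / (1 - t1) = D/q" "(p + q) / (t2 - t1) = D/p + D/q"
        "(1 - t1) * (D/q) = p + r" "t1 * (D/p) = r"
      using D pq pair_pos unfolding arc_lengths unfolding t1_def t2_def
      by (simp_all add: divide_mult_divide_cancel_right add_divide_mult_divide del: divide_divide_eq_right)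
    have on_arc: "X T = 1 - T / t2" "Y T = (1 - T) / (1 - t1)" "Z T = (T - t1) / (t2 - t1)"
      using 2 T t unfolding X_def Y_def Z_def circular_tent_def tent_def circle_shift_def
      by (auto simp: field_simps)
    have "(q + r) * X T + (p + r) * Y T + (p + q) * Z T
        = (q + r) - T * ((q + r) / t2) + (1 - T) * ((p + r) / (1 - t1)) + (T - t1) * ((p + q) / (t2 - t1))"
      unfolding on_arc by (simp add: algebra_simps)
    also have "\<dots> = p + q + r" unfolding slopes(1-3) using slopes(4,5)
      by (simp only: ring_distribs mult_1_left; linarith)
    finally show ?thesis .
  next
    case 3
    then have "0 < q*r / D" using T unfolding arc_lengths(2)[symmetric] by simp
    then have qr: "0 < q" "0 < r" using nonneg D by (auto simp: zero_less_divide_iff zero_less_mult_iff)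
    have slopes: "(q + r) / (1 - t2) = D/q + D/r" "(p + r) / (1 - t1) = D/q" "(p + q) / (1 + t1 - t2) = D/r"
        "(1 - t2) * (D/q) = r" "(1 + t1 - t2) * (D/r) = p + q"
      using D qr pair_pos unfolding arc_lengths
      by (simp_all add: divide_mult_divide_cancel_right add_divide_mult_divide del: divide_divide_eq_right)
    have on_arc: "X T = (T - t2) / (1 - t2)" "Y T = (1 - T) / (1 - t1)" "Z T = (1 + t1 - T) / (1 + t1 - t2)"
      using 3 T t unfolding X_def Y_def Z_def circular_tent_def tent_def circle_shift_def
      by (auto simp: algebra_simps)
    have "(q + r) * X T + (p + r) * Y T + (p + q) * Z T
        = (T - t2) * ((q + r) / (1 - t2)) + (1 - T) * ((p + r) / (1 - t1))
          + (1 + t1 - T) * ((p + q) / (1 + t1 - t2))"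
      unfolding on_arc by (simp add: algebra_simps)
    also have "\<dots> = p + q + r" unfolding slopes(1-3) using slopes(4,5)
      by (simp only: ring_distribs mult_1_left; linarith)
    finally show ?thesis .
  qed
qed

lemma AE_weighted_sum_XYZ:
  "AE T in unit_uniform. (q + r) * X T + (p + r) * Y T + (p + q) * Z T = p + q + r"
proof (rule AE_uniform_measureI)
  have "AE T in lborel. T \<notin> {0, 1, t1, t2}"
    by (intro AE_not_in countable_imp_null_set_lborel) auto
  then show "AE T in lborel.
      T \<in> {0..1} \<longrightarrow> (q + r) * X T + (p + r) * Y T + (p + q) * Z T = p + q + r"
    by eventually_elim (auto intro: weighted_sum_XYZ)
qed simp

end

lemma sum_union_disjoint3:
  assumes "finite A" "finite B" "finite C" "A \<inter> B = {}" "A \<inter> C = {}" "B \<inter> C = {}"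
  shows "sum f (A \<union> B \<union> C) = sum f A + sum f B + sum f C"
  using assms by (simp add: sum.union_disjoint Int_Un_distrib2)

theorem mainTheorem6:
  fixes d :: nat and w :: "nat \<Rightarrow> real" and A B C :: "nat set"
  assumes "d \<ge> 3"
    and "\<forall>i\<in>{1..d}. w i > 0"
    and "A \<union> B \<union> C = {1..d}"
    and "A \<inter> B = {}" and "A \<inter> C = {}" and "B \<inter> C = {}"
    and "A \<noteq> {}" and "B \<noteq> {}" and "C \<noteq> {}"
    and "(\<Sum>i\<in>A. w i) + (\<Sum>i\<in>B. w i) + (\<Sum>i\<in>C. w i)
           \<ge> 2 * max (\<Sum>i\<in>A. w i) (max (\<Sum>i\<in>B. w i) (\<Sum>i\<in>C. w i))"
  shows "\<exists>M :: (nat \<Rightarrow> real) measure.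
           prob_space M \<and>
           sets M = sets (PiM {1..d} (\<lambda>_. lborel)) \<and>
           (\<forall>i\<in>{1..d}. distr M lborel (\<lambda>x. x i) = uniform_measure lborel {0..1}) \<and>
           (AE x in M. (\<Sum>i=1..d. w i * x i) = (\<Sum>i=1..d. w i) / 2)"
proof -
  note partition = assms(3-6)
  define a b c where "a = (\<Sum>i\<in>A. w i)" and "b = (\<Sum>i\<in>B. w i)" and "c = (\<Sum>i\<in>C. w i)"
  have sub: "A \<subseteq> {1..d}" "B \<subseteq> {1..d}" "C \<subseteq> {1..d}"
    using partition(1) by auto
  then have finite: "finite A" "finite B" "finite C"
    by (auto intro: finite_subset)
  have "0 < a" "0 < b" "0 < c"
    unfolding a_def b_def c_def using finite sub assms(2,7-9) by (auto intro!: sum_pos)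
  then interpret three_tents "b + c - a" "a + c - b" "a + b - c"
    by unfold_locales (use assms(10) in \<open>auto simp: a_def b_def c_def\<close>)
  define f where "f i = (if i \<in> A then X else if i \<in> B then Y else Z)" for i
  have f_measurable: "f i \<in> measurable unit_uniform lborel" for i
    unfolding f_def X_def Y_def Z_def by simp
  have parts: "(\<Sum>i\<in>A. w i * f i T) = a * X T" "(\<Sum>i\<in>B. w i * f i T) = b * Y T"
      "(\<Sum>i\<in>C. w i * f i T) = c * Z T" for T
    using partition(2-4) unfolding a_def b_def c_def f_def sum_distrib_right
    by (auto intro!: sum.cong)
  have weighted_sum:
    "(\<Sum>i=1..d. w i * (\<lambda>i\<in>{1..d}. f i T) i) = a * X T + b * Y T + c * Z T" for T
    unfolding partition(1)[symmetric] sum_union_disjoint3[OF finite partition(2-4)] parts[symmetric] by simp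
  have total: "(\<Sum>i=1..d. w i) = a + b + c"
    unfolding partition(1)[symmetric] sum_union_disjoint3[OF finite partition(2-4)] a_def b_def c_def ..
  show ?thesis
  proof (rule unit_uniform_coupling)
    show "distr unit_uniform lborel (f i) = unit_uniform" for i
      unfolding f_def using distr_XYZ by simp
    show "AE T in unit_uniform.
        (\<Sum>i=1..d. w i * (\<lambda>i\<in>{1..d}. f i T) i) = (\<Sum>i=1..d. w i) / 2"
      using AE_weighted_sum_XYZ unfolding weighted_sum total
      by (rule eventually_mono) (simp add: field_simps)
  qed (use f_measurable in simp_all)
qed

end
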